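(* In the setting of the context, assume $\mathbf{A}$ and $\tilde{\mathbf{A}}$ are invertible. Then the coarse-grid correction of PFASST satisfies the approximation property for large CFL number: there exist $\mu^*>0$ and a constant $c>0$ independent of $\mu$ such that for all $\mu\ge\mu^*$, $$\big\|\mathbf{C}^{-1}-\mathbf{T}_C^F\tilde{\mathbf{P}}^{-1}\mathbf{T}_F^C\big\|\le\frac{c}{\mu}.$$
   Context: Fix positive integers $L,M,N$ and coarse sizes $\tilde M\le M$, $\tilde N\le N$. Let $\mathbf{Q}=(q_{m,j})\in\mathbb{R}^{M\times M}$ with $q_{m,j}=\int_0^{\tau_m}\ell_j(s)\,ds$ be the collocation matrix for the (right) Gauss–Radau nodes $0<\tau_1<\dots<\tau_M=1$ on $[0,1]$ ($\ell_j$ Lagrange basis polynomials). Let $\tilde{\mathbf{Q}}_\Delta\in\mathbb{R}^{\tilde M\times\tilde M}$ be the lower-triangular weight matrix of a simpler quadrature rule on the coarse nodes; as a standing assumption of the stiff-limit analysis, $\tilde{\mathbf{Q}}_\Delta$ is invertible. Let $\mathbf{A}\in\mathbb{C}^{N\times N}$, $\tilde{\mathbf{A}}\in\mathbb{C}^{\tilde N\times\tilde N}$, $\mu>0$. Let $\mathbf{N}_M$ and $\tilde{\mathbf{N}}_{\tilde M}$ be the $M\times M$ and $\tilde M\times\tilde M$ matrices with ones in the last column and zeros elsewhere, $\mathbf{H}=\mathbf{N}_M\otimes\mathbf{I}_N$, $\tilde{\mathbf{H}}=\tilde{\mathbf{N}}_{\tilde M}\otimes\mathbf{I}_{\tilde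 N}$, $\mathbf{E}\in\mathbb{R}^{L\times L}$ with ones on the first subdiagonal and zeros elsewhere. $\mathbf{C}=\mathbf{I}_{LMN}-\mu\,\mathbf{I}_L\otimes\mathbf{Q}\otimes\mathbf{A}-\mathbf{E}\otimes\mathbf{H}$ and $\tilde{\mathbf{P}}=\mathbf{I}_{L\tilde M\tilde N}-\mu\,\mathbf{I}_L\otimes\tilde{\mathbf{Q}}_\Delta\otimes\tilde{\mathbf{A}}-\mathbf{E}\otimes\tilde{\mathbf{H}}$. Restriction $\mathbf{T}_F^C=\mathbf{I}_L\otimes\mathbf{T}_{F,Q}^C\otimes\mathbf{T}_{F,A}^C\in\mathbb{R}^{L\tilde M\tilde N\times LMN}$ and interpolation $\mathbf{T}_C^F=\mathbf{I}_L\otimes\mathbf{T}_{C,Q}^F\otimes\mathbf{T}_{C,A}^F\in\mathbb{R}^{LMN\times L\tilde M\tilde N}$, with $(\mathbf{E}\otimes\tilde{\mathbf{H}})\mathbf{T}_F^C=\mathbf{T}_F^C(\mathbf{E}\otimes\mathbf{H})$. $\|\cdot\|$ is any induced matrix norm. *)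

theory Defs
  imports "HOL-Analysis.Analysis" "HOL-Computational_Algebra.Polynomial" "Jordan_Normal_Form.Matrix"
begin

definition kron :: "'a::times mat \<Rightarrow> 'a mat \<Rightarrow> 'a mat" where
  "kron A B = mat (dim_row A * dim_row B) (dim_col A * dim_col B)
     (\<lambda>(i,j). A $$ (i div dim_row B, j div dim_col B) * B $$ (i mod dim_row B, j mod dim_col B))"

(* shifted Legendre polynomials on [0,1] *)
fun sleg :: "nat \<Rightarrow> real poly" where
  "sleg 0 = 1"
| "sleg (Suc 0) = [:-1, 2:]"
| "sleg (Suc (Suc n)) = Polynomial.smult (1 / (real n + 2))
     (Polynomial.smult (2 * real n + 3) ([:-1, 2:] * sleg (Suc n)) - Polynomial.smult (real n + 1) (sleg n))"

(* right Gauss-Radau polynomial on [0,1]: its M roots are the right Radau nodes *)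
definition radau_poly :: "nat \<Rightarrow> real poly" where
  "radau_poly M = sleg M - sleg (M - 1)"

(* tau 0 < ... < tau (M-1) are the right Gauss-Radau nodes on [0,1] (0-based indexing) *)
definition right_radau_nodes :: "nat \<Rightarrow> (nat \<Rightarrow> real) \<Rightarrow> bool" where
  "right_radau_nodes M \<tau> \<longleftrightarrow> strict_mono_on {..<M} \<tau> \<and> 0 < \<tau> 0 \<and> \<tau> (M - 1) = 1
      \<and> (\<forall>m<M. poly (radau_poly M) (\<tau> m) = 0)"

definition lagrange_basis :: "(nat \<Rightarrow> real) \<Rightarrow> nat \<Rightarrow> nat \<Rightarrow> real \<Rightarrow> real" where
  "lagrange_basis \<tau> M j s = (\<Prod>k\<in>{..<M} - {j}. (s - \<tau> k) / (\<tau> j - \<tau> k))"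

definition coll_Q :: "(nat \<Rightarrow> real) \<Rightarrow> nat \<Rightarrow> real mat" where
  "coll_Q \<tau> M = mat M M (\<lambda>(m,j). integral {0..\<tau> m} (lagrange_basis \<tau> M j))"

definition lastcol_ones :: "nat \<Rightarrow> 'a::{zero,one} mat" where
  "lastcol_ones n = mat n n (\<lambda>(i,j). if j = n - 1 then 1 else 0)"

definition subdiag :: "nat \<Rightarrow> 'a::{zero,one} mat" where
  "subdiag L = mat L L (\<lambda>(i,j). if i = j + 1 then 1 else 0)"

definition cmat :: "real mat \<Rightarrow> complex mat" where
  "cmat B = map_mat complex_of_real B"

(* C = I - mu I_L (x) Q (x) A - E (x) H,  H = N_M (x) I_N *)
definition sys_mat :: "nat \<Rightarrow> real mat \<Rightarrow> complex mat \<Rightarrow> real \<Rightarrow> complex mat" where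
  "sys_mat L Q A \<mu> = (let M = dim_row Q; N = dim_row A in
     1\<^sub>m (L * M * N) - complex_of_real \<mu> \<cdot>\<^sub>m kron (kron (1\<^sub>m L) (cmat Q)) A
       - kron (kron (subdiag L) (lastcol_ones M)) (1\<^sub>m N))"

definition minv :: "'a::semiring_1 mat \<Rightarrow> 'a mat" where
  "minv A = (SOME B. inverts_mat A B \<and> inverts_mat B A)"

definition is_vec_norm :: "nat \<Rightarrow> (complex vec \<Rightarrow> real) \<Rightarrow> bool" where
  "is_vec_norm n \<nu> \<longleftrightarrow>
     (\<forall>x\<in>carrier_vec n. 0 \<le> \<nu> x \<and> (\<nu> x = 0 \<longleftrightarrow> x = 0\<^sub>v n)) \<and>
     (\<forall>x\<in>carrier_vec n. \<forall>a. \<nu> (a \<cdot>\<^sub>v x) = cmod a * \<nu> x) \<and>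
     (\<forall>x\<in>carrier_vec n. \<forall>y\<in>carrier_vec n. \<nu> (x + y) \<le> \<nu> x + \<nu> y)"

definition induced_norm :: "(complex vec \<Rightarrow> real) \<Rightarrow> complex mat \<Rightarrow> real" where
  "induced_norm \<nu> B = Sup {\<nu> (B *\<^sub>v x) / \<nu> x | x. x \<in> carrier_vec (dim_col B) \<and> x \<noteq> 0\<^sub>v (dim_col B)}"

end

theory Submission
  imports Defs "Jordan_Normal_Form.Determinant"
begin

(* C and P are both of the form R - mu K with K = I (x) Q (x) A invertible.  For the fine level
   this is the invertibility of the collocation matrix: if Q x = 0, the antiderivative of
   sum_j x_j l_j vanishing at 0 is a polynomial of degree at most M with the M + 1 roots
   0, tau_1, ..., tau_M, hence zero, and evaluating its derivative at the nodes gives x = 0.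
   Rewriting (R - mu K) x = y as mu x = K^-1 R x - K^-1 y shows that R - mu K is invertible with
   inverse of norm O(1/mu) as soon as mu exceeds twice the norm of K^-1 R.  The transfer operators
   do not depend on mu, so the triangle inequality bounds the difference of the two inverses by
   c / mu; arbitrary norms are compared with the l1 norm by the equivalence of norms in finite
   dimension. *)

no_notation Finite_Cartesian_Product.vec.vec_nth (infixl \<open>$\<close> 90)

section \<open>The l1 norm\<close>

definition l1_norm :: "complex vec \<Rightarrow> real" where
  "l1_norm v = (\<Sum>i<dim_vec v. cmod (v $ i))"

lemma l1_norm_nonneg: "0 \<le> l1_norm v"
  unfolding l1_norm_def by (simp add: sum_nonneg)

lemma l1_norm_smult: "l1_norm (a \<cdot>\<^sub>v x) = cmod a * l1_norm x"
  unfolding l1_norm_def by (simp add: norm_mult sum_distrib_left)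

lemma l1_norm_add_le:
  assumes "x \<in> carrier_vec n" "y \<in> carrier_vec n"
  shows "l1_norm (x + y) \<le> l1_norm x + l1_norm y"
proof -
  have "l1_norm (x + y) = (\<Sum>i<n. cmod (x $ i + y $ i))"
    using assms unfolding l1_norm_def by simp
  also have "\<dots> \<le> (\<Sum>i<n. cmod (x $ i) + cmod (y $ i))"
    by (rule sum_mono) (rule norm_triangle_ineq)
  also have "\<dots> = l1_norm x + l1_norm y"
    using assms unfolding l1_norm_def by (simp add: sum.distrib)
  finally show ?thesis .
qed

lemma l1_norm_eq_0_iff:
  assumes "x \<in> carrier_vec n"
  shows "l1_norm x = 0 \<longleftrightarrow> x = 0\<^sub>v n"
proof
  assume "l1_norm x = 0"
  then have "\<forall>i\<in>{..<n}. cmod (x $ i) = 0"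
    using assms unfolding l1_norm_def by (subst sum_nonneg_eq_0_iff[symmetric]) auto
  then show "x = 0\<^sub>v n" using assms by (intro eq_vecI) auto
qed (simp add: l1_norm_def)

lemma is_vec_norm_l1_norm: "is_vec_norm n l1_norm"
  unfolding is_vec_norm_def
  by (auto simp: l1_norm_nonneg l1_norm_eq_0_iff l1_norm_smult intro: l1_norm_add_le)

lemma norm_index_le_l1_norm:
  assumes "x \<in> carrier_vec n" "i < n"
  shows "cmod (x $ i) \<le> l1_norm x"
  using assms unfolding l1_norm_def by (intro member_le_sum) auto

lemma bounded_seq_coordinatewise_convergent_subseq:
  fixes X :: "nat \<Rightarrow> complex vec"
  assumes "\<And>j i. i < n \<Longrightarrow> cmod (X j $ i) \<le> B"
  shows "\<exists>r l. strict_mono r \<and> (\<forall>i<n. (\<lambda>j. X (r j) $ i) \<longlonglongrightarrow> l i)"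
  using assms
proof (induction n)
  case 0
  show ?case by (intro exI[of _ id]) (auto simp: strict_mono_def)
next
  case (Suc n)
  then obtain r l where r: "strict_mono r" and l: "\<forall>i<n. (\<lambda>j. X (r j) $ i) \<longlonglongrightarrow> l i"
    by auto
  have "bounded (range (\<lambda>j. X (r j) $ n))"
    using Suc.prems by (intro boundedI[of _ B]) auto
  then obtain l' s where s: "strict_mono s" and l': "((\<lambda>j. X (r j) $ n) \<circ> s) \<longlonglongrightarrow> l'"
    using bounded_imp_convergent_subsequence by blast
  show ?case
  proof (intro exI[of _ "r \<circ> s"] exI[of _ "l(n := l')"] conjI allI impI)
    show "strict_mono (r \<circ> s)" using r s by (rule strict_mono_o)
    fix i assume i: "i < Suc n"
    show "(\<lambda>j. X ((r \<circ> s) j) $ i) \<longlonglongrightarrow> (l(n := l')) i"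
    proof (cases "i = n")
      case False
      then have "((\<lambda>j. X (r j) $ i) \<circ> s) \<longlonglongrightarrow> l i"
        using i l s by (intro LIMSEQ_subseq_LIMSEQ) auto
      then show ?thesis using False by (simp add: o_def)
    qed (use l' in \<open>simp add: o_def\<close>)
  qed
qed

lemma bounded_seq_l1_convergent_subseq:
  fixes X :: "nat \<Rightarrow> complex vec"
  assumes X: "\<And>j. X j \<in> carrier_vec n" and bounded: "\<And>j i. i < n \<Longrightarrow> cmod (X j $ i) \<le> B"
  shows "\<exists>r y. strict_mono r \<and> y \<in> carrier_vec n \<and> (\<lambda>j. l1_norm (X (r j) - y)) \<longlonglongrightarrow> 0"
proof -
  obtain r l where r: "strict_mono r" and l: "\<forall>i<n. (\<lambda>j. X (r j) $ i) \<longlonglongrightarrow> l i"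
    using bounded_seq_coordinatewise_convergent_subseq[of n X B] bounded by blast
  have "l1_norm (X (r j) - vec n l) = (\<Sum>i<n. cmod (X (r j) $ i - l i))" for j
    using X[of "r j"] by (simp add: l1_norm_def)
  moreover have "(\<lambda>j. \<Sum>i<n. cmod (X (r j) $ i - l i)) \<longlonglongrightarrow> (\<Sum>i<n. cmod (l i - l i))"
    by (intro tendsto_intros) (use l in auto)
  ultimately show ?thesis using r by (intro exI[of _ r] exI[of _ "vec n l"]) auto
qed

section \<open>Arbitrary norms on complex vectors\<close>

context
  fixes n :: nat and \<nu> :: "complex vec \<Rightarrow> real"
  assumes vec_norm: "is_vec_norm n \<nu>"
begin

lemma vec_norm_nonneg: "x \<in> carrier_vec n \<Longrightarrow> 0 \<le> \<nu> x"
  using vec_norm unfolding is_vec_norm_def by blast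

lemma vec_norm_eq_0_iff: "x \<in> carrier_vec n \<Longrightarrow> \<nu> x = 0 \<longleftrightarrow> x = 0\<^sub>v n"
  using vec_norm unfolding is_vec_norm_def by blast

lemma vec_norm_smult: "x \<in> carrier_vec n \<Longrightarrow> \<nu> (a \<cdot>\<^sub>v x) = cmod a * \<nu> x"
  using vec_norm unfolding is_vec_norm_def by blast

lemma vec_norm_add_le: "x \<in> carrier_vec n \<Longrightarrow> y \<in> carrier_vec n \<Longrightarrow> \<nu> (x + y) \<le> \<nu> x + \<nu> y"
  using vec_norm unfolding is_vec_norm_def by blast

lemma vec_norm_zero: "\<nu> (0\<^sub>v n) = 0"
  using vec_norm_eq_0_iff by simp

lemma vec_norm_diff_le:
  assumes x: "x \<in> carrier_vec n" and y: "y \<in> carrier_vec n"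
  shows "\<nu> (x - y) \<le> \<nu> x + \<nu> y"
proof -
  have "x - y = x + (-1) \<cdot>\<^sub>v y" using x y by (intro eq_vecI) auto
  then show ?thesis using vec_norm_add_le[OF x, of "(-1) \<cdot>\<^sub>v y"] vec_norm_smult[OF y, of "-1"] y
    by simp
qed

lemma vec_norm_truncation_le:
  assumes x: "x \<in> carrier_vec n"
  shows "\<nu> (vec n (\<lambda>i. if i < k then x $ i else 0)) \<le> (\<Sum>i<k. cmod (x $ i) * \<nu> (unit_vec n i))"
proof (induction k)
  case 0
  have "vec n (\<lambda>i. if i < 0 then x $ i else 0) = 0\<^sub>v n" by (intro eq_vecI) auto
  then show ?case using vec_norm_zero by simp
next
  case (Suc k)
  have "vec n (\<lambda>i. if i < Suc k then x $ i else 0) =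
      vec n (\<lambda>i. if i < k then x $ i else 0) + (x $ k) \<cdot>\<^sub>v unit_vec n k"
    by (intro eq_vecI) (auto simp: unit_vec_def less_Suc_eq)
  then have "\<nu> (vec n (\<lambda>i. if i < Suc k then x $ i else 0)) \<le>
       \<nu> (vec n (\<lambda>i. if i < k then x $ i else 0)) + \<nu> ((x $ k) \<cdot>\<^sub>v unit_vec n k)"
    by (simp add: vec_norm_add_le)
  also have "\<dots> \<le> (\<Sum>i<k. cmod (x $ i) * \<nu> (unit_vec n i)) + cmod (x $ k) * \<nu> (unit_vec n k)"
    using Suc vec_norm_smult[of "unit_vec n k" "x $ k"] by simp
  finally show ?case by simp
qed

lemma vec_norm_le_l1_norm: "\<exists>K\<ge>0. \<forall>x\<in>carrier_vec n. \<nu> x \<le> K * l1_norm x"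
proof (intro exI[of _ "\<Sum>i<n. \<nu> (unit_vec n i)"] conjI ballI)
  show "0 \<le> (\<Sum>i<n. \<nu> (unit_vec n i))" using vec_norm_nonneg by (intro sum_nonneg) auto
  fix x :: "complex vec" assume x: "x \<in> carrier_vec n"
  have "vec n (\<lambda>i. if i < n then x $ i else 0) = x" using x by (intro eq_vecI) auto
  then have "\<nu> x \<le> (\<Sum>i<n. cmod (x $ i) * \<nu> (unit_vec n i))"
    using vec_norm_truncation_le[OF x, of n] by simp
  also have "\<dots> \<le> (\<Sum>i<n. l1_norm x * \<nu> (unit_vec n i))"
    using norm_index_le_l1_norm[OF x] vec_norm_nonneg
    by (intro sum_mono mult_right_mono) auto
  also have "\<dots> = (\<Sum>i<n. \<nu> (unit_vec n i)) * l1_norm x"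
    by (simp add: sum_distrib_left mult.commute)
  finally show "\<nu> x \<le> (\<Sum>i<n. \<nu> (unit_vec n i)) * l1_norm x" .
qed

lemma l1_norm_le_vec_norm: "\<exists>k>0. \<forall>x\<in>carrier_vec n. l1_norm x \<le> k * \<nu> x"
proof (rule ccontr)
  assume neg: "\<not> ?thesis"
  have "\<exists>x. x \<in> carrier_vec n \<and> l1_norm x = 1 \<and> \<nu> x < inverse (real (Suc j))" for j
  proof -
    obtain x where x: "x \<in> carrier_vec n" and lt: "real (Suc j) * \<nu> x < l1_norm x"
      using neg by (auto simp: not_le dest: spec[of _ "real (Suc j)"])
    have "0 \<le> real (Suc j) * \<nu> x" using vec_norm_nonneg[OF x] by simp
    then have pos: "0 < l1_norm x" using lt by linarith
    let ?z = "complex_of_real (inverse (l1_norm x)) \<cdot>\<^sub>v x"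
    have "l1_norm ?z = 1" "\<nu> ?z = \<nu> x / l1_norm x"
      using pos vec_norm_smult[OF x] by (simp_all add: l1_norm_smult norm_divide field_simps)
    moreover have "\<nu> x / l1_norm x < inverse (real (Suc j))"
      using lt pos by (simp add: field_simps)
    ultimately show ?thesis using x by (intro exI[of _ ?z]) auto
  qed
  then obtain X where X: "\<And>j. X j \<in> carrier_vec n" "\<And>j. l1_norm (X j) = 1"
    "\<And>j. \<nu> (X j) < inverse (real (Suc j))"
    by metis
  obtain r y where r: "strict_mono r" and y: "y \<in> carrier_vec n"
    and lim: "(\<lambda>j. l1_norm (X (r j) - y)) \<longlonglongrightarrow> 0"
    using bounded_seq_l1_convergent_subseq[of X n 1] X(1,2) norm_index_le_l1_norm by metis
  obtain K where K: "\<forall>x\<in>carrier_vec n. \<nu> x \<le> K * l1_norm x"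
    using vec_norm_le_l1_norm by blast
  have "\<nu> y \<le> inverse (real (Suc (r j))) + K * l1_norm (X (r j) - y)" for j
  proof -
    have "y = X (r j) - (X (r j) - y)" using X(1) y by (intro eq_vecI) auto
    then have "\<nu> y \<le> \<nu> (X (r j)) + \<nu> (X (r j) - y)"
      using vec_norm_diff_le[of "X (r j)" "X (r j) - y"] X(1) y by simp
    moreover have "\<nu> (X (r j) - y) \<le> K * l1_norm (X (r j) - y)"
      using K X(1) y by simp
    ultimately show ?thesis using X(3)[of "r j"] by linarith
  qed
  moreover have "(\<lambda>j. inverse (real (Suc (r j))) + K * l1_norm (X (r j) - y)) \<longlonglongrightarrow> 0 + K * 0"
    using LIMSEQ_subseq_LIMSEQ[OF LIMSEQ_inverse_real_of_nat r] lim
    by (intro tendsto_intros) (simp_all add: o_def)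
  ultimately have "\<nu> y \<le> 0"
    by (intro LIMSEQ_le[OF tendsto_const]) auto
  then have "y = 0\<^sub>v n" using vec_norm_eq_0_iff[OF y] vec_norm_nonneg[OF y] by simp
  then have "(\<lambda>j. 1 :: real) \<longlonglongrightarrow> 0" using lim X(1,2) by simp
  then show False using LIMSEQ_unique[OF tendsto_const] by fastforce
qed

end

lemma row_scalar_prod_sum:
  "A \<in> carrier_mat m n \<Longrightarrow> x \<in> carrier_vec n \<Longrightarrow> i < m \<Longrightarrow>
   Matrix.row A i \<bullet> x = (\<Sum>j<n. A $$ (i, j) * x $ j)"
  unfolding scalar_prod_def atLeast0LessThan by (intro sum.cong) auto

lemma l1_norm_mult_mat_vec_le:
  assumes A: "A \<in> carrier_mat m n"
  shows "\<exists>b\<ge>0. \<forall>x\<in>carrier_vec n. l1_norm (A *\<^sub>v x) \<le> b * l1_norm x"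
proof (intro exI[of _ "\<Sum>i<m. \<Sum>j<n. cmod (A $$ (i, j))"] conjI ballI)
  show "0 \<le> (\<Sum>i<m. \<Sum>j<n. cmod (A $$ (i, j)))" by (intro sum_nonneg) auto
  fix x :: "complex vec" assume x: "x \<in> carrier_vec n"
  have "l1_norm (A *\<^sub>v x) = (\<Sum>i<m. cmod (\<Sum>j<n. A $$ (i, j) * x $ j))"
    using A x by (simp add: l1_norm_def row_scalar_prod_sum[OF A x])
  also have "\<dots> \<le> (\<Sum>i<m. \<Sum>j<n. cmod (A $$ (i, j)) * l1_norm x)"
  proof (rule sum_mono)
    fix i
    have "cmod (\<Sum>j<n. A $$ (i, j) * x $ j) \<le> (\<Sum>j<n. cmod (A $$ (i, j) * x $ j))"
      by (rule norm_sum)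
    also have "\<dots> = (\<Sum>j<n. cmod (A $$ (i, j)) * cmod (x $ j))"
      by (simp add: norm_mult)
    also have "\<dots> \<le> (\<Sum>j<n. cmod (A $$ (i, j)) * l1_norm x)"
      using norm_index_le_l1_norm[OF x] by (intro sum_mono mult_left_mono) auto
    finally show "cmod (\<Sum>j<n. A $$ (i, j) * x $ j) \<le> (\<Sum>j<n. cmod (A $$ (i, j)) * l1_norm x)" .
  qed
  also have "\<dots> = (\<Sum>i<m. \<Sum>j<n. cmod (A $$ (i, j))) * l1_norm x"
    by (simp add: sum_distrib_right)
  finally show "l1_norm (A *\<^sub>v x) \<le> (\<Sum>i<m. \<Sum>j<n. cmod (A $$ (i, j))) * l1_norm x" .
qed

lemma vec_norm_mult_mat_vec_le:
  assumes \<nu>1: "is_vec_norm n \<nu>1" and \<nu>2: "is_vec_norm m \<nu>2" and A: "A \<in> carrier_mat m n"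
  shows "\<exists>b\<ge>0. \<forall>x\<in>carrier_vec n. \<nu>2 (A *\<^sub>v x) \<le> b * \<nu>1 x"
proof -
  obtain K where K: "K \<ge> 0" "\<forall>x\<in>carrier_vec m. \<nu>2 x \<le> K * l1_norm x"
    using vec_norm_le_l1_norm[OF \<nu>2] by blast
  obtain b where b: "b \<ge> 0" "\<forall>x\<in>carrier_vec n. l1_norm (A *\<^sub>v x) \<le> b * l1_norm x"
    using l1_norm_mult_mat_vec_le[OF A] by blast
  obtain k where k: "k > 0" "\<forall>x\<in>carrier_vec n. l1_norm x \<le> k * \<nu>1 x"
    using l1_norm_le_vec_norm[OF \<nu>1] by blast
  show ?thesis
  proof (intro exI[of _ "K * b * k"] conjI ballI)
    show "0 \<le> K * b * k" using K b k by simp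
    fix x :: "complex vec" assume x: "x \<in> carrier_vec n"
    have "\<nu>2 (A *\<^sub>v x) \<le> K * l1_norm (A *\<^sub>v x)" using K A x by simp
    also have "\<dots> \<le> K * (b * l1_norm x)" using K b x by (intro mult_left_mono) auto
    also have "\<dots> \<le> K * (b * (k * \<nu>1 x))" using K b k x by (intro mult_left_mono) auto
    finally show "\<nu>2 (A *\<^sub>v x) \<le> K * b * k * \<nu>1 x" by (simp add: mult.assoc)
  qed
qed

lemma induced_norm_le:
  assumes \<nu>: "is_vec_norm n \<nu>" and n: "0 < n" and B: "B \<in> carrier_mat m n"
    and bound: "\<forall>x\<in>carrier_vec n. \<nu> (B *\<^sub>v x) \<le> c * \<nu> x"
  shows "induced_norm \<nu> B \<le> c"
proof -
  have dim: "dim_col B = n" using B by blast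
  have "unit_vec n 0 $ 0 = (1 :: complex)" "(0\<^sub>v n :: complex vec) $ 0 = 0"
    using n by simp_all
  then have "unit_vec n 0 \<noteq> (0\<^sub>v n :: complex vec)" by force
  then have nonempty: "{\<nu> (B *\<^sub>v x) / \<nu> x |x. x \<in> carrier_vec n \<and> x \<noteq> 0\<^sub>v n} \<noteq> {}"
    using unit_vec_carrier by blast
  show ?thesis
    unfolding induced_norm_def dim
  proof (rule cSup_least[OF nonempty])
    fix r assume "r \<in> {\<nu> (B *\<^sub>v x) / \<nu> x |x. x \<in> carrier_vec n \<and> x \<noteq> 0\<^sub>v n}"
    then obtain x where r: "r = \<nu> (B *\<^sub>v x) / \<nu> x" and x: "x \<in> carrier_vec n" "x \<noteq> 0\<^sub>v n"
      by blast
    have "0 < \<nu> x" using vec_norm_nonneg[OF \<nu> x(1)] vec_norm_eq_0_iff[OF \<nu> x(1)] x(2) by linarith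
    moreover have "\<nu> (B *\<^sub>v x) \<le> c * \<nu> x" using bound x(1) by blast
    ultimately show "r \<le> c" unfolding r by (simp add: pos_divide_le_eq)
  qed
qed

lemma invertible_matI:
  "A \<in> carrier_mat n n \<Longrightarrow> B \<in> carrier_mat n n \<Longrightarrow> A * B = 1\<^sub>m n \<Longrightarrow> B * A = 1\<^sub>m n \<Longrightarrow> invertible_mat A"
  unfolding invertible_mat_def inverts_mat_def by auto

lemma invertible_mat_if_kernel_trivial:
  fixes A :: "'a::field mat"
  assumes A: "A \<in> carrier_mat n n"
    and kernel: "\<And>v. v \<in> carrier_vec n \<Longrightarrow> A *\<^sub>v v = 0\<^sub>v n \<Longrightarrow> v = 0\<^sub>v n"
  shows "invertible_mat A"
proof -
  have "A \<in> Units (ring_mat TYPE('a) n ())"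
    using det_0_iff_vec_prod_zero_field[OF A] kernel by (intro det_non_zero_imp_unit[OF A]) blast
  then obtain B where "B \<in> carrier_mat n n" "B * A = 1\<^sub>m n" "A * B = 1\<^sub>m n"
    unfolding Units_def ring_mat_def by auto
  then show ?thesis using A by (intro invertible_matI) auto
qed

lemma minv_inverse:
  assumes "invertible_mat A" "A \<in> carrier_mat n n"
  shows "minv A \<in> carrier_mat n n" "A * minv A = 1\<^sub>m n" "minv A * A = 1\<^sub>m n"
proof -
  have "\<exists>B. inverts_mat A B \<and> inverts_mat B A" using assms(1) unfolding invertible_mat_def by blast
  then have "inverts_mat A (minv A) \<and> inverts_mat (minv A) A"
    unfolding minv_def by (rule someI_ex)
  then have AB: "A * minv A = 1\<^sub>m n" and BA: "minv A * A = 1\<^sub>m (dim_row (minv A))"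
    using assms(2) unfolding inverts_mat_def by auto
  have "dim_row (minv A) = n" using arg_cong[OF BA, of dim_col] assms(2) by simp
  moreover have "dim_col (minv A) = n" using arg_cong[OF AB, of dim_col] by simp
  ultimately show "minv A \<in> carrier_mat n n" "A * minv A = 1\<^sub>m n" "minv A * A = 1\<^sub>m n"
    using AB BA by auto
qed

lemma smult_mat_mult_mat_vec:
  "A \<in> carrier_mat m n \<Longrightarrow> v \<in> carrier_vec n \<Longrightarrow> (k \<cdot>\<^sub>m A) *\<^sub>v v = k \<cdot>\<^sub>v (A *\<^sub>v v)"
  by (intro eq_vecI) (auto simp: smult_scalar_prod_distrib[of _ n])

lemma shifted_mat_solution_le:
  fixes K R :: "complex mat"
  assumes \<nu>: "is_vec_norm n \<nu>" and K: "K \<in> carrier_mat n n" "invertible_mat K"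
    and R: "R \<in> carrier_mat n n"
  shows "\<exists>\<mu>0>0. \<exists>c>0. \<forall>\<mu>\<ge>\<mu>0. \<forall>x\<in>carrier_vec n.
           \<nu> x \<le> c / \<mu> * \<nu> ((R - complex_of_real \<mu> \<cdot>\<^sub>m K) *\<^sub>v x)"
proof -
  define Ki where "Ki = minv K"
  have Ki: "Ki \<in> carrier_mat n n" "Ki * K = 1\<^sub>m n" using minv_inverse[OF K(2,1)] unfolding Ki_def by auto
  obtain g where g: "g \<ge> 0" "\<forall>x\<in>carrier_vec n. \<nu> (Ki * R *\<^sub>v x) \<le> g * \<nu> x"
    using vec_norm_mult_mat_vec_le[OF \<nu> \<nu>] Ki R by (metis mult_carrier_mat)
  obtain k where k: "k \<ge> 0" "\<forall>x\<in>carrier_vec n. \<nu> (Ki *\<^sub>v x) \<le> k * \<nu> x"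
    using vec_norm_mult_mat_vec_le[OF \<nu> \<nu> Ki(1)] by blast
  show ?thesis
  proof (rule exI[of _ "2 * g + 1"], intro conjI exI[of _ "2 * k + 1"] allI impI ballI)
    fix \<mu> :: real and x :: "complex vec" assume \<mu>: "2 * g + 1 \<le> \<mu>" and x: "x \<in> carrier_vec n"
    let ?y = "(R - complex_of_real \<mu> \<cdot>\<^sub>m K) *\<^sub>v x"
    have "R - complex_of_real \<mu> \<cdot>\<^sub>m K \<in> carrier_mat n n" using K(1) by (intro minus_carrier_mat) auto
    then have y: "?y \<in> carrier_vec n" using x by (rule mult_mat_vec_carrier)
    have "Ki *\<^sub>v ?y = (Ki * R) *\<^sub>v x - complex_of_real \<mu> \<cdot>\<^sub>v (Ki *\<^sub>v (K *\<^sub>v x))"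
      using Ki K R x
      by (simp add: minus_mult_distrib_mat_vec[of R n n] smult_mat_mult_mat_vec[OF K(1)]
          mult_minus_distrib_mat_vec[of Ki n n] mult_mat_vec[of Ki n n])
    also have "Ki *\<^sub>v (K *\<^sub>v x) = x"
      using Ki K x by (simp flip: assoc_mult_mat_vec[of Ki n n K n])
    finally have eq: "complex_of_real \<mu> \<cdot>\<^sub>v x = (Ki * R) *\<^sub>v x - Ki *\<^sub>v ?y"
      using Ki R x y by (intro eq_vecI) (auto simp: algebra_simps dest: arg_cong[of _ _ "\<lambda>v. v $ _"])
    have "\<mu> * \<nu> x = \<nu> (complex_of_real \<mu> \<cdot>\<^sub>v x)"
      using vec_norm_smult[OF \<nu> x] \<mu> g(1) by simp
    also have "\<dots> \<le> \<nu> ((Ki * R) *\<^sub>v x) + \<nu> (Ki *\<^sub>v ?y)"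
      unfolding eq using Ki R x y by (intro vec_norm_diff_le[OF \<nu>]) auto
    also have "\<dots> \<le> g * \<nu> x + k * \<nu> ?y" using g k x y by (intro add_mono) auto
    finally have "\<mu> * \<nu> x \<le> g * \<nu> x + k * \<nu> ?y" .
    moreover have "g * \<nu> x \<le> \<mu> / 2 * \<nu> x"
      using \<mu> vec_norm_nonneg[OF \<nu> x] by (intro mult_right_mono) auto
    ultimately have "\<mu> / 2 * \<nu> x \<le> k * \<nu> ?y" by linarith
    then have "\<nu> x \<le> 2 * k / \<mu> * \<nu> ?y" using \<mu> g(1) by (simp add: field_simps)
    also have "\<dots> \<le> (2 * k + 1) / \<mu> * \<nu> ?y"
      using \<mu> g(1) vec_norm_nonneg[OF \<nu> y] by (intro mult_right_mono divide_right_mono) auto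
    finally show "\<nu> x \<le> (2 * k + 1) / \<mu> * \<nu> ?y" .
  qed (use g k in auto)
qed

lemma shifted_mat_inverse_bound:
  fixes K R :: "complex mat"
  assumes \<nu>: "is_vec_norm n \<nu>" and K: "K \<in> carrier_mat n n" "invertible_mat K"
    and R: "R \<in> carrier_mat n n"
  shows "\<exists>\<mu>0>0. \<exists>c>0. \<forall>\<mu>\<ge>\<mu>0. invertible_mat (R - complex_of_real \<mu> \<cdot>\<^sub>m K) \<and>
           (\<forall>y\<in>carrier_vec n. \<nu> (minv (R - complex_of_real \<mu> \<cdot>\<^sub>m K) *\<^sub>v y) \<le> c / \<mu> * \<nu> y)"
proof -
  obtain \<mu>0 c where \<mu>0: "\<mu>0 > 0" "c > 0" and bound: "\<And>\<mu> x. \<mu> \<ge> \<mu>0 \<Longrightarrow> x \<in> carrier_vec n \<Longrightarrow>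
      \<nu> x \<le> c / \<mu> * \<nu> ((R - complex_of_real \<mu> \<cdot>\<^sub>m K) *\<^sub>v x)"
    using shifted_mat_solution_le[OF assms] by blast
  show ?thesis
  proof (rule exI[of _ \<mu>0], intro conjI exI[of _ c] allI impI \<mu>0)
    fix \<mu> :: real assume \<mu>: "\<mu>0 \<le> \<mu>"
    let ?C = "R - complex_of_real \<mu> \<cdot>\<^sub>m K"
    have C: "?C \<in> carrier_mat n n" using K(1) by (intro minus_carrier_mat) auto
    show inv: "invertible_mat ?C"
    proof (rule invertible_mat_if_kernel_trivial[OF C])
      fix v assume v: "v \<in> carrier_vec n" and "?C *\<^sub>v v = 0\<^sub>v n"
      then have "\<nu> v \<le> 0" using bound[OF \<mu> v] vec_norm_zero[OF \<nu>] by simp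
      then show "v = 0\<^sub>v n" using vec_norm_nonneg[OF \<nu> v] vec_norm_eq_0_iff[OF \<nu> v] by simp
    qed
    show "\<forall>y\<in>carrier_vec n. \<nu> (minv ?C *\<^sub>v y) \<le> c / \<mu> * \<nu> y"
    proof
      fix y :: "complex vec" assume y: "y \<in> carrier_vec n"
      have "?C *\<^sub>v (minv ?C *\<^sub>v y) = y"
        using minv_inverse[OF inv C] y C by (simp flip: assoc_mult_mat_vec[of _ n n _ n])
      then show "\<nu> (minv ?C *\<^sub>v y) \<le> c / \<mu> * \<nu> y"
        using bound[OF \<mu>, of "minv ?C *\<^sub>v y"] minv_inverse[OF inv C] y by simp
    qed
  qed
qed

lemma coarse_correction_le:
  fixes Fi Ci TC TF :: "complex mat"
  assumes \<nu>: "is_vec_norm n \<nu>"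
    and Fi: "Fi \<in> carrier_mat n n" and Ci: "Ci \<in> carrier_mat nc nc"
    and TC: "TC \<in> carrier_mat n nc" and TF: "TF \<in> carrier_mat nc n"
    and Fi_le: "\<forall>y\<in>carrier_vec n. \<nu> (Fi *\<^sub>v y) \<le> a * \<nu> y"
    and Ci_le: "\<forall>z\<in>carrier_vec nc. \<nu>c (Ci *\<^sub>v z) \<le> b * \<nu>c z"
    and TC_le: "\<forall>z\<in>carrier_vec nc. \<nu> (TC *\<^sub>v z) \<le> t1 * \<nu>c z"
    and TF_le: "\<forall>y\<in>carrier_vec n. \<nu>c (TF *\<^sub>v y) \<le> t2 * \<nu> y"
    and "0 \<le> t1" "0 \<le> b"
  shows "\<forall>x\<in>carrier_vec n. \<nu> ((Fi - TC * Ci * TF) *\<^sub>v x) \<le> (a + t1 * b * t2) * \<nu> x"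
proof
  fix x :: "complex vec" assume x: "x \<in> carrier_vec n"
  have "(Fi - TC * Ci * TF) *\<^sub>v x = Fi *\<^sub>v x - (TC * Ci * TF) *\<^sub>v x"
    using TC Ci TF by (intro minus_mult_distrib_mat_vec[OF Fi _ x]) auto
  also have "(TC * Ci * TF) *\<^sub>v x = (TC * Ci) *\<^sub>v (TF *\<^sub>v x)"
    using TC Ci by (intro assoc_mult_mat_vec[OF _ TF x]) auto
  also have "\<dots> = TC *\<^sub>v (Ci *\<^sub>v (TF *\<^sub>v x))"
    using TF x by (intro assoc_mult_mat_vec[OF TC Ci]) auto
  finally have "\<nu> ((Fi - TC * Ci * TF) *\<^sub>v x) \<le> \<nu> (Fi *\<^sub>v x) + \<nu> (TC *\<^sub>v (Ci *\<^sub>v (TF *\<^sub>v x)))"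
    using vec_norm_diff_le[OF \<nu>] Fi Ci TC TF x by simp
  also have "\<dots> \<le> a * \<nu> x + t1 * (b * (t2 * \<nu> x))"
    using Fi_le Ci_le TC_le TF_le Ci TF x assms(10,11)
    by (intro add_mono order.trans[OF _ mult_left_mono[OF order.trans[OF _ mult_left_mono]]]) auto
  finally show "\<nu> ((Fi - TC * Ci * TF) *\<^sub>v x) \<le> (a + t1 * b * t2) * \<nu> x"
    by (simp add: algebra_simps)
qed

section \<open>Kronecker products\<close>

lemma dim_kron [simp]:
  "dim_row (kron A B) = dim_row A * dim_row B" "dim_col (kron A B) = dim_col A * dim_col B"
  unfolding kron_def by auto

lemma kron_carrier_mat [simp]:
  "A \<in> carrier_mat a b \<Longrightarrow> B \<in> carrier_mat c d \<Longrightarrow> kron A B \<in> carrier_mat (a * c) (b * d)"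
  by auto

lemma index_kron:
  "i < dim_row A * dim_row B \<Longrightarrow> j < dim_col A * dim_col B \<Longrightarrow>
   kron A B $$ (i, j) = A $$ (i div dim_row B, j div dim_col B) * B $$ (i mod dim_row B, j mod dim_col B)"
  unfolding kron_def by auto

lemma index_mult_mat_sum:
  "A \<in> carrier_mat a b \<Longrightarrow> B \<in> carrier_mat b c \<Longrightarrow> i < a \<Longrightarrow> j < c \<Longrightarrow>
   (A * B) $$ (i, j) = (\<Sum>k<b. A $$ (i, k) * B $$ (k, j))"
  by (auto simp: scalar_prod_def atLeast0LessThan intro!: sum.cong)

lemma div_less_of_less_mult: "i < a * c \<Longrightarrow> i div c < (a::nat)"
  by (metis less_mult_imp_div_less mult.commute)

lemma kron_mult_kron:
  fixes A B C D :: "'a::comm_semiring_1 mat"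
  assumes A: "A \<in> carrier_mat a b" and B: "B \<in> carrier_mat c d"
    and C: "C \<in> carrier_mat b e" and D: "D \<in> carrier_mat d f"
  shows "kron A B * kron C D = kron (A * C) (B * D)"
proof (rule eq_matI)
  fix i j assume "i < dim_row (kron (A * C) (B * D))" "j < dim_col (kron (A * C) (B * D))"
  then have i: "i < a * c" and j: "j < e * f" using A B C D by auto
  then have "0 < c" "0 < f" by (auto intro: gr0I)
  then have ic: "i div c < a" "i mod c < c" and jf: "j div f < e" "j mod f < f"
    using i j by (auto simp: div_less_of_less_mult)
  have "(kron A B * kron C D) $$ (i, j) = (\<Sum>k<b * d. kron A B $$ (i, k) * kron C D $$ (k, j))"
    using A B C D i j by (intro index_mult_mat_sum) auto
  also have "\<dots> = (\<Sum>k<b * d. A $$ (i div c, k div d) * B $$ (i mod c, k mod d) *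
                     (C $$ (k div d, j div f) * D $$ (k mod d, j mod f)))"
    using A B C D i j by (intro sum.cong) (auto simp: index_kron)
  also have "\<dots> = (\<Sum>p<b. \<Sum>q<d. A $$ (i div c, p) * B $$ (i mod c, q) *
                     (C $$ (p, j div f) * D $$ (q, j mod f)))"
    by (subst sum_mult_product) (intro sum.cong refl, simp)
  also have "\<dots> = (\<Sum>p<b. A $$ (i div c, p) * C $$ (p, j div f)) *
                   (\<Sum>q<d. B $$ (i mod c, q) * D $$ (q, j mod f))"
    by (simp add: sum_product algebra_simps)
  also have "\<dots> = (A * C) $$ (i div c, j div f) * (B * D) $$ (i mod c, j mod f)"
    using index_mult_mat_sum[OF A C ic(1) jf(1)] index_mult_mat_sum[OF B D ic(2) jf(2)] by simp
  also have "\<dots> = kron (A * C) (B * D) $$ (i, j)"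
    using A B C D i j by (simp add: index_kron)
  finally show "(kron A B * kron C D) $$ (i, j) = kron (A * C) (B * D) $$ (i, j)" .
qed (use A B C D in auto)

lemma kron_one_mat: "kron (1\<^sub>m a) (1\<^sub>m b) = (1\<^sub>m (a * b) :: 'a::semiring_1 mat)"
proof (rule eq_matI)
  fix i j assume "i < dim_row (1\<^sub>m (a * b) :: 'a mat)" "j < dim_col (1\<^sub>m (a * b) :: 'a mat)"
  then have i: "i < a * b" and j: "j < a * b" by auto
  then have "0 < b" by (auto intro: gr0I)
  moreover have "(i div b = j div b \<and> i mod b = j mod b) \<longleftrightarrow> i = j"
    by (metis div_mult_mod_eq)
  ultimately show "kron (1\<^sub>m a) (1\<^sub>m b) $$ (i, j) = (1\<^sub>m (a * b) :: 'a mat) $$ (i, j)"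
    using i j by (auto simp: index_kron div_less_of_less_mult)
qed auto

lemma invertible_one_mat: "invertible_mat (1\<^sub>m n :: 'a::semiring_1 mat)"
  by (rule invertible_matI[of _ n "1\<^sub>m n"]) auto

lemma invertible_kron:
  fixes A B :: "'a::comm_semiring_1 mat"
  assumes A: "A \<in> carrier_mat m m" "invertible_mat A" and B: "B \<in> carrier_mat n n" "invertible_mat B"
  shows "invertible_mat (kron A B)"
proof (rule invertible_matI[of _ "m * n" "kron (minv A) (minv B)"])
  note Ai = minv_inverse[OF A(2,1)] and Bi = minv_inverse[OF B(2,1)]
  show "kron A B * kron (minv A) (minv B) = 1\<^sub>m (m * n)"
    using A B Ai Bi by (simp add: kron_mult_kron[of _ m m _ n n _ m _ n] kron_one_mat)
  show "kron (minv A) (minv B) * kron A B = 1\<^sub>m (m * n)"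
    using A B Ai Bi by (simp add: kron_mult_kron[of _ m m _ n n _ m _ n] kron_one_mat)
qed (use A B minv_inverse[OF A(2,1)] minv_inverse[OF B(2,1)] in auto)

lemma cmat_carrier_iff [simp]: "cmat A \<in> carrier_mat n m \<longleftrightarrow> A \<in> carrier_mat n m"
  unfolding cmat_def by auto

lemma invertible_cmat:
  assumes "invertible_mat Q" "Q \<in> carrier_mat m m"
  shows "invertible_mat (cmat Q)"
proof (rule invertible_matI[of _ m "cmat (minv Q)"])
  note Qi = minv_inverse[OF assms]
  show "cmat Q * cmat (minv Q) = 1\<^sub>m m" "cmat (minv Q) * cmat Q = 1\<^sub>m m"
    unfolding cmat_def using Qi assms
    by (simp_all flip: of_real_hom.mat_hom_mult add: of_real_hom.mat_hom_one)
qed (use assms minv_inverse[OF assms] in auto)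

lemma sys_mat_carrier [simp]:
  "sys_mat L Q A \<mu> \<in> carrier_mat (L * dim_row Q * dim_row A) (L * dim_row Q * dim_row A)"
  unfolding sys_mat_def Let_def carrier_mat_def by (simp add: subdiag_def lastcol_ones_def)

lemma sys_mat_inverse_bound:
  assumes \<nu>: "is_vec_norm (L * M * N) \<nu>"
    and Q: "Q \<in> carrier_mat M M" "invertible_mat Q" and A: "A \<in> carrier_mat N N" "invertible_mat A"
  shows "\<exists>\<mu>0>0. \<exists>c>0. \<forall>\<mu>\<ge>\<mu>0. invertible_mat (sys_mat L Q A \<mu>) \<and>
           (\<forall>y\<in>carrier_vec (L * M * N). \<nu> (minv (sys_mat L Q A \<mu>) *\<^sub>v y) \<le> c / \<mu> * \<nu> y)"
proof -
  let ?K = "kron (kron (1\<^sub>m L) (cmat Q)) A"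
  let ?S = "kron (kron (subdiag L) (lastcol_ones M)) (1\<^sub>m N) :: complex mat"
  have "invertible_mat (kron (1\<^sub>m L) (cmat Q))"
    using Q by (intro invertible_kron[of _ L _ M] invertible_one_mat invertible_cmat) auto
  then have K: "?K \<in> carrier_mat (L * M * N) (L * M * N)" "invertible_mat ?K"
    using Q A by (auto intro: invertible_kron[of _ "L * M" _ N])
  have S: "?S \<in> carrier_mat (L * M * N) (L * M * N)" by (simp add: subdiag_def lastcol_ones_def)
  have sys_eq: "sys_mat L Q A \<mu> = (1\<^sub>m (L * M * N) - ?S) - complex_of_real \<mu> \<cdot>\<^sub>m ?K" for \<mu>
  proof -
    have "dim_row Q = M" "dim_row A = N" using Q A by auto
    then show ?thesis
      unfolding sys_mat_def Let_def using K(1) S by (intro eq_matI) (simp_all del: dim_kron)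
  qed
  show ?thesis
    unfolding sys_eq by (rule shifted_mat_inverse_bound[OF \<nu> K minus_carrier_mat[OF S]])
qed

section \<open>Invertibility of the collocation matrix\<close>

definition lagrange_poly :: "(nat \<Rightarrow> real) \<Rightarrow> nat \<Rightarrow> nat \<Rightarrow> real poly" where
  "lagrange_poly \<tau> M j = (\<Prod>k\<in>{..<M} - {j}. Polynomial.smult (1 / (\<tau> j - \<tau> k)) [:- \<tau> k, 1:])"

lemma poly_lagrange_poly: "poly (lagrange_poly \<tau> M j) = lagrange_basis \<tau> M j"
  unfolding lagrange_poly_def lagrange_basis_def poly_prod
  by (intro ext prod.cong refl) (simp add: diff_divide_distrib)

lemma degree_lagrange_poly: "j < M \<Longrightarrow> degree (lagrange_poly \<tau> M j) \<le> M - 1"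
proof -
  assume j: "j < M"
  have "degree (lagrange_poly \<tau> M j) \<le>
      sum (degree \<circ> (\<lambda>k. Polynomial.smult (1 / (\<tau> j - \<tau> k)) [:- \<tau> k, 1:])) ({..<M} - {j})"
    unfolding lagrange_poly_def by (rule degree_prod_sum_le) simp
  also have "\<dots> \<le> (\<Sum>k\<in>{..<M} - {j}. 1)"
    unfolding o_def by (intro sum_mono order.trans[OF degree_smult_le]) simp
  also have "\<dots> = M - 1" using j by simp
  finally show ?thesis .
qed

lemma lagrange_basis_node:
  assumes inj: "inj_on \<tau> {..<M}" and "j < M" "k < M"
  shows "lagrange_basis \<tau> M j (\<tau> k) = (if j = k then 1 else 0)"
proof (cases "j = k")
  case True
  have "\<tau> k \<noteq> \<tau> i" if "i \<in> {..<M} - {k}" for i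
    using inj that \<open>k < M\<close> by (auto dest: inj_onD)
  then show ?thesis using True unfolding lagrange_basis_def by (auto intro: prod.neutral)
next
  case False
  have "lagrange_basis \<tau> M j (\<tau> k) = 0"
    unfolding lagrange_basis_def using False assms(2,3) by (intro prod_zero) auto
  then show ?thesis using False by simp
qed

lemma poly_antiderivative_exists:
  "\<exists>P. pderiv P = (p :: real poly) \<and> poly P 0 = 0 \<and> degree P \<le> degree p + 1"
proof (intro exI conjI)
  let ?P = "\<Sum>i\<le>degree p. monom (coeff p i / (real i + 1)) (Suc i)"
  have "pderiv ?P = (\<Sum>i\<le>degree p. pderiv (monom (coeff p i / (real i + 1)) (Suc i)))"
    using higher_pderiv_sum[of 1] by simp
  also have "\<dots> = (\<Sum>i\<le>degree p. monom (coeff p i) i)"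
    by (intro sum.cong refl) (simp add: pderiv_monom field_simps)
  finally have "pderiv ?P = (\<Sum>i\<le>degree p. monom (coeff p i) i)" .
  then show "pderiv ?P = p" using poly_as_sum_of_monoms by simp
  show "poly ?P 0 = 0" by (simp add: poly_sum poly_monom)
  show "degree ?P \<le> degree p + 1"
    by (intro degree_sum_le order.trans[OF degree_monom_le]) auto
qed

lemma integral_poly_pderiv:
  assumes "pderiv P = p" "(a::real) \<le> b"
  shows "integral {a..b} (poly p) = poly P b - poly P a"
proof (rule integral_unique, rule fundamental_theorem_of_calculus[OF assms(2)])
  fix x assume "x \<in> {a..b}"
  show "(poly P has_vector_derivative poly p x) (at x within {a..b})"
    using poly_DERIV[of P x] unfolding assms(1) has_real_derivative_iff_has_vector_derivative
    by (rule has_vector_derivative_at_within)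
qed

lemma coll_Q_invertible:
  assumes "0 < M" and mono: "strict_mono_on {..<M} \<tau>" and pos: "0 < \<tau> 0"
  shows "invertible_mat (coll_Q \<tau> M)"
proof (rule invertible_mat_if_kernel_trivial)
  show Q: "coll_Q \<tau> M \<in> carrier_mat M M" unfolding coll_Q_def by simp
  have inj: "inj_on \<tau> {..<M}" using mono by (rule strict_mono_on_imp_inj_on)
  have nodes_pos: "0 < \<tau> m" if "m < M" for m
    using mono pos that by (cases m) (auto simp: strict_mono_on_def intro: order.strict_trans)
  fix x :: "real vec" assume x: "x \<in> carrier_vec M" and Qx: "coll_Q \<tau> M *\<^sub>v x = 0\<^sub>v M"
  define p where "p = (\<Sum>j<M. Polynomial.smult (x $ j) (lagrange_poly \<tau> M j))"
  obtain P where P: "pderiv P = p" "poly P 0 = 0" "degree P \<le> degree p + 1"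
    using poly_antiderivative_exists by blast
  have "poly P (\<tau> m) = 0" if m: "m < M" for m
  proof -
    have "poly P (\<tau> m) = integral {0..\<tau> m} (poly p)"
      using integral_poly_pderiv[OF P(1), of 0 "\<tau> m"] nodes_pos[OF m] P(2) by simp
    also have "\<dots> = (\<Sum>j<M. integral {0..\<tau> m} (lagrange_basis \<tau> M j) * x $ j)"
    proof -
      have "(\<lambda>t. x $ j * poly (lagrange_poly \<tau> M j) t) integrable_on {0..\<tau> m}" for j
        by (intro integrable_continuous_interval continuous_intros)
      then show ?thesis
        unfolding p_def poly_sum poly_smult poly_lagrange_poly[symmetric]
        by (subst integral_sum) (auto simp: mult.commute)
    qed
    also have "\<dots> = (\<Sum>j<M. coll_Q \<tau> M $$ (m, j) * x $ j)"
      using m by (intro sum.cong) (simp_all add: coll_Q_def)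
    also have "\<dots> = (coll_Q \<tau> M *\<^sub>v x) $ m"
      using row_scalar_prod_sum[OF Q x m] Q m by simp
    finally show ?thesis using Qx m by simp
  qed
  moreover have "degree p \<le> M - 1"
    unfolding p_def using degree_lagrange_poly
    by (intro degree_sum_le order.trans[OF degree_smult_le]) auto
  moreover have "card (insert 0 (\<tau> ` {..<M})) = M + 1"
  proof -
    have "0 \<notin> \<tau> ` {..<M}" using nodes_pos by force
    then show ?thesis using card_image[OF inj] by simp
  qed
  ultimately have "P = 0"
    using P(2,3) \<open>0 < M\<close> by (intro poly_eqI_degree[of "insert 0 (\<tau> ` {..<M})"]) auto
  then have p: "p = 0" using P(1) by simp
  show "x = 0\<^sub>v M"
  proof (rule eq_vecI)
    fix k assume "k < dim_vec (0\<^sub>v M :: real vec)"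
    then have k: "k < M" by simp
    have "x $ k = (\<Sum>j<M. x $ j * (if j = k then 1 else 0))"
      using k by (simp add: if_distrib cong: if_cong)
    also have "\<dots> = poly p (\<tau> k)"
      unfolding p_def poly_sum poly_smult poly_lagrange_poly
      using lagrange_basis_node[OF inj _ k] by (intro sum.cong) auto
    finally show "x $ k = 0\<^sub>v M $ k" using k p by simp
  qed (use x in simp)
qed

theorem lemma3:
  fixes L M N Mt Nt :: nat
    and \<tau> :: "nat \<Rightarrow> real"
    and Qd :: "real mat"
    and A At :: "complex mat"
    and TFQ TFA TCQ TCA :: "real mat"
    and \<nu> :: "complex vec \<Rightarrow> real"
  assumes "0 < L" "0 < M" "0 < N" "0 < Mt" "0 < Nt" "Mt \<le> M" "Nt \<le> N"
    and "right_radau_nodes M \<tau>"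
    and "Qd \<in> carrier_mat Mt Mt" "\<forall>i j. i < j \<longrightarrow> j < Mt \<longrightarrow> Qd $$ (i, j) = 0" "invertible_mat Qd"
    and "A \<in> carrier_mat N N" "invertible_mat A"
    and "At \<in> carrier_mat Nt Nt" "invertible_mat At"
    and "TFQ \<in> carrier_mat Mt M" "TFA \<in> carrier_mat Nt N"
    and "TCQ \<in> carrier_mat M Mt" "TCA \<in> carrier_mat N Nt"
    and "kron (kron (subdiag L) (lastcol_ones Mt)) (1\<^sub>m Nt) * kron (kron (1\<^sub>m L) (cmat TFQ)) (cmat TFA)
         = kron (kron (1\<^sub>m L) (cmat TFQ)) (cmat TFA) * kron (kron (subdiag L) (lastcol_ones M)) (1\<^sub>m N)"
    and "is_vec_norm (L * M * N) \<nu>"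
  shows "\<exists>\<mu>s>0. \<exists>c>0. \<forall>\<mu>\<ge>\<mu>s.
     invertible_mat (sys_mat L (coll_Q \<tau> M) A \<mu>) \<and> invertible_mat (sys_mat L Qd At \<mu>) \<and>
     induced_norm \<nu> (minv (sys_mat L (coll_Q \<tau> M) A \<mu>)
        - kron (kron (1\<^sub>m L) (cmat TCQ)) (cmat TCA) * minv (sys_mat L Qd At \<mu>)
          * kron (kron (1\<^sub>m L) (cmat TFQ)) (cmat TFA)) \<le> c / \<mu>"
proof -
  let ?n = "L * M * N" and ?nt = "L * Mt * Nt"
  let ?TC = "kron (kron (1\<^sub>m L) (cmat TCQ)) (cmat TCA)" and ?TF = "kron (kron (1\<^sub>m L) (cmat TFQ)) (cmat TFA)"
  have Q: "coll_Q \<tau> M \<in> carrier_mat M M" "invertible_mat (coll_Q \<tau> M)"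
    using assms(2,8) coll_Q_invertible unfolding right_radau_nodes_def coll_Q_def by auto
  obtain \<mu>1 c1 where "\<mu>1 > 0" "c1 > 0" and fine: "\<And>\<mu>. \<mu> \<ge> \<mu>1 \<Longrightarrow>
      invertible_mat (sys_mat L (coll_Q \<tau> M) A \<mu>) \<and>
      (\<forall>y\<in>carrier_vec ?n. \<nu> (minv (sys_mat L (coll_Q \<tau> M) A \<mu>) *\<^sub>v y) \<le> c1 / \<mu> * \<nu> y)"
    using sys_mat_inverse_bound[OF assms(21) Q assms(12,13)] by blast
  obtain \<mu>2 c2 where "\<mu>2 > 0" "c2 > 0" and coarse: "\<And>\<mu>. \<mu> \<ge> \<mu>2 \<Longrightarrow>
      invertible_mat (sys_mat L Qd At \<mu>) \<and>
      (\<forall>y\<in>carrier_vec ?nt. l1_norm (minv (sys_mat L Qd At \<mu>) *\<^sub>v y) \<le> c2 / \<mu> * l1_norm y)"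
    using sys_mat_inverse_bound[OF is_vec_norm_l1_norm assms(9,11,14,15)] by blast
  have TC: "?TC \<in> carrier_mat ?n ?nt" and TF: "?TF \<in> carrier_mat ?nt ?n"
    using assms(16-19) by simp_all
  obtain t1 where t1: "t1 \<ge> 0" "\<forall>z\<in>carrier_vec ?nt. \<nu> (?TC *\<^sub>v z) \<le> t1 * l1_norm z"
    using vec_norm_mult_mat_vec_le[OF is_vec_norm_l1_norm assms(21) TC] by blast
  obtain t2 where t2: "t2 \<ge> 0" "\<forall>y\<in>carrier_vec ?n. l1_norm (?TF *\<^sub>v y) \<le> t2 * \<nu> y"
    using vec_norm_mult_mat_vec_le[OF assms(21) is_vec_norm_l1_norm TF] by blast
  show ?thesis
  proof (rule exI[of _ "max \<mu>1 \<mu>2"], intro conjI exI[of _ "c1 + t1 * c2 * t2"] allI impI)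
    fix \<mu> assume "max \<mu>1 \<mu>2 \<le> \<mu>"
    then have \<mu>: "\<mu> \<ge> \<mu>1" "\<mu> \<ge> \<mu>2" "\<mu> > 0" using \<open>\<mu>1 > 0\<close> by auto
    let ?F = "sys_mat L (coll_Q \<tau> M) A \<mu>" and ?C = "sys_mat L Qd At \<mu>"
    show F: "invertible_mat ?F" and C: "invertible_mat ?C" using fine coarse \<mu> by blast+
    have "?F \<in> carrier_mat ?n ?n" "?C \<in> carrier_mat ?nt ?nt"
      using sys_mat_carrier[of L _ _ \<mu>] Q(1) assms(9,12,14) by (metis carrier_matD(1))+
    note Fi = minv_inverse(1)[OF F this(1)] and Ci = minv_inverse(1)[OF C this(2)]
    have "\<forall>x\<in>carrier_vec ?n. \<nu> ((minv ?F - ?TC * minv ?C * ?TF) *\<^sub>v x) \<le> (c1 / \<mu> + t1 * (c2 / \<mu>) * t2) * \<nu> x"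
      using fine coarse \<mu> t1 t2 \<open>c2 > 0\<close>
      by (intro coarse_correction_le[OF assms(21) Fi Ci TC TF]) auto
    moreover have "minv ?F - ?TC * minv ?C * ?TF \<in> carrier_mat ?n ?n"
      using TC TF Ci by (intro minus_carrier_mat) auto
    moreover have "0 < ?n" using assms(1-3) by simp
    ultimately have "induced_norm \<nu> (minv ?F - ?TC * minv ?C * ?TF) \<le> c1 / \<mu> + t1 * (c2 / \<mu>) * t2"
      using induced_norm_le[OF assms(21)] by blast
    then show "induced_norm \<nu> (minv ?F - ?TC * minv ?C * ?TF) \<le> (c1 + t1 * c2 * t2) / \<mu>"
      by (simp add: add_divide_distrib)
  qed (use \<open>\<mu>1 > 0\<close> \<open>c1 > 0\<close> \<open>c2 > 0\<close> t1(1) t2(1) in \<open>auto intro: add_pos_nonneg\<close>)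
qed

end
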